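(* Let $n\ge1$ and $p$ a prime. For $m\ge1$ let $Y_m$ be the subspace of $\Sigma(n,p)$ spanned by all $\overline{B}_q$ where $q$ has at least $m$ components, and let $\mathcal{T}$ be the subspace of $\Sigma(n,p)$ spanned by all $\overline{B}_q-\overline{B}_r$ with $q\approx r$. Then: (1) if $n$ is odd or $p\ne2$, then $\mathcal{R}(n,p)\subseteq (Y_2\cap\mathcal{T})+Y_3$; (2) if $n$ is even and $p=2$, then $\mathcal{R}(n,p)\subseteq \langle\overline{B}_{[n/2,n/2]}\rangle+(Y_2\cap\mathcal{T})+Y_3$.
   Context: A composition of $n$ is a sequence of positive integers with sum $n$; $q\approx r$ means $r$ is a reordering of the components of $q$. The descent algebra $\Sigma_n$ has basis $\{B_q\}$ indexed by compositions of $n$ with multiplication $B_qB_r=\sum_{Z\in S(q,r)}B_{c(Z)}$, where for $q=[a_1,\dots,a_s]$, $r=[b_1,\dots,b_t]$, $S(q,r)$ is the set of $s\times t$ non-negative integer matrices with row sums $a_i$ and column sums $b_j$, and $c(Z)$ is the composition obtained by reading the entries of $Z$ row by row and omitting zeros. Let $\mathcal{Z}_n$ be the subring of integral combinations of the $B_q$ and $\Sigma(n,p)=\mathcal{Z}_n/p\mathcal{Z}_n$, an $\mathbb{F}_p$-algebra with basis $\overline{B}_q$ (images of $B_q$); $\mathcal{R}(n,p)$ denotes its (Jacobson) radical. *)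

theory Defs
  imports Main "HOL-Library.Multiset" "HOL-Computational_Algebra.Primes"
begin

definition comps :: "nat \<Rightarrow> nat list set" where
  "comps n = {q. (\<forall>x\<in>set q. 0 < x) \<and> sum_list q = n}"

definition Smat :: "nat list \<Rightarrow> nat list \<Rightarrow> (nat \<Rightarrow> nat \<Rightarrow> nat) set" where
  "Smat q r = {Z. (\<forall>i j. (length q \<le> i \<or> length r \<le> j) \<longrightarrow> Z i j = 0)
     \<and> (\<forall>i<length q. (\<Sum>j<length r. Z i j) = q ! i)
     \<and> (\<forall>j<length r. (\<Sum>i<length q. Z i j) = r ! j)}"

definition cZ :: "nat \<Rightarrow> nat \<Rightarrow> (nat \<Rightarrow> nat \<Rightarrow> nat) \<Rightarrow> nat list" where
  "cZ s t Z = filter (\<lambda>x. x \<noteq> 0) (concat (map (\<lambda>i. map (\<lambda>j. Z i j) [0..<t]) [0..<s]))"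

text \<open>Structure constant: coefficient of B_u in B_q B_r.\<close>
definition Bcoeff :: "nat list \<Rightarrow> nat list \<Rightarrow> nat list \<Rightarrow> nat" where
  "Bcoeff q r u = card {Z \<in> Smat q r. cZ (length q) (length r) Z = u}"

text \<open>Sigma(n,p): an element is its coefficient vector w.r.t. the basis
  (images of B_q, q a composition of n), coefficients in {0..p-1} = F_p.\<close>
definition Sig :: "nat \<Rightarrow> nat \<Rightarrow> (nat list \<Rightarrow> int) set" where
  "Sig n p = {f. (\<forall>q. q \<notin> comps n \<longrightarrow> f q = 0) \<and> (\<forall>q. 0 \<le> f q \<and> f q < int p)}"

definition sadd :: "nat \<Rightarrow> (nat list \<Rightarrow> int) \<Rightarrow> (nat list \<Rightarrow> int) \<Rightarrow> (nat list \<Rightarrow> int)" where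
  "sadd p f g = (\<lambda>q. (f q + g q) mod int p)"

definition sneg :: "nat \<Rightarrow> (nat list \<Rightarrow> int) \<Rightarrow> (nat list \<Rightarrow> int)" where
  "sneg p f = (\<lambda>q. (- f q) mod int p)"

definition smul :: "nat \<Rightarrow> nat \<Rightarrow> (nat list \<Rightarrow> int) \<Rightarrow> (nat list \<Rightarrow> int) \<Rightarrow> (nat list \<Rightarrow> int)" where
  "smul n p f g = (\<lambda>u. (\<Sum>q\<in>comps n. \<Sum>r\<in>comps n. f q * g r * int (Bcoeff q r u)) mod int p)"

definition Bbar :: "nat \<Rightarrow> nat list \<Rightarrow> (nat list \<Rightarrow> int)" where
  "Bbar p q = (\<lambda>s. if s = q then 1 mod int p else 0)"

definition lideal :: "nat \<Rightarrow> nat \<Rightarrow> (nat list \<Rightarrow> int) set \<Rightarrow> bool" where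
  "lideal n p I \<longleftrightarrow> I \<subseteq> Sig n p \<and> (\<lambda>_. 0) \<in> I
     \<and> (\<forall>x\<in>I. \<forall>y\<in>I. sadd p x y \<in> I) \<and> (\<forall>x\<in>I. sneg p x \<in> I)
     \<and> (\<forall>a\<in>Sig n p. \<forall>x\<in>I. smul n p a x \<in> I)"

definition max_lideal :: "nat \<Rightarrow> nat \<Rightarrow> (nat list \<Rightarrow> int) set \<Rightarrow> bool" where
  "max_lideal n p I \<longleftrightarrow> lideal n p I \<and> I \<noteq> Sig n p
     \<and> (\<forall>J. lideal n p J \<and> I \<subseteq> J \<longrightarrow> J = I \<or> J = Sig n p)"

definition rad :: "nat \<Rightarrow> nat \<Rightarrow> (nat list \<Rightarrow> int) set" where
  "rad n p = Sig n p \<inter> \<Inter> {I. max_lideal n p I}"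

definition lincomb :: "nat \<Rightarrow> ((nat list \<Rightarrow> int) \<Rightarrow> int) \<Rightarrow> (nat list \<Rightarrow> int) set \<Rightarrow> (nat list \<Rightarrow> int)" where
  "lincomb p c F = (\<lambda>q. (\<Sum>v\<in>F. c v * v q) mod int p)"

definition span_p :: "nat \<Rightarrow> (nat list \<Rightarrow> int) set \<Rightarrow> (nat list \<Rightarrow> int) set" where
  "span_p p S = {lincomb p c F | c F. finite F \<and> F \<subseteq> S}"

definition ssum :: "nat \<Rightarrow> (nat list \<Rightarrow> int) set \<Rightarrow> (nat list \<Rightarrow> int) set \<Rightarrow> (nat list \<Rightarrow> int) set" where
  "ssum p U V = {sadd p u v | u v. u \<in> U \<and> v \<in> V}"

definition Ysp :: "nat \<Rightarrow> nat \<Rightarrow> nat \<Rightarrow> (nat list \<Rightarrow> int) set" where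
  "Ysp n p m = span_p p {Bbar p q | q. q \<in> comps n \<and> m \<le> length q}"

definition Tsp :: "nat \<Rightarrow> nat \<Rightarrow> (nat list \<Rightarrow> int) set" where
  "Tsp n p = span_p p {sadd p (Bbar p q) (sneg p (Bbar p r)) | q r.
      q \<in> comps n \<and> r \<in> comps n \<and> mset q = mset r}"

end

theory Submission
  imports Defs "HOL-Number_Theory.Cong"
begin

text \<open>The radical lies in the kernel of every algebra homomorphism \<open>\<Sigma>(n, p) \<rightarrow> \<FF>\<^sub>p\<close>, since
  such a kernel is a maximal left ideal. For \<open>a + b = n\<close> the map \<open>\<chi>\<^sub>a\<^sub>b\<close> sending \<open>B\<^sub>q\<close> to
  \<open>[q has one part] + [q = [a, b]] + [q = [b, a]]\<close> is such a homomorphism: \<open>c(Z)\<close> has at least as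
  many parts as \<open>q\<close> and \<open>r\<close>, and for two-part \<open>q\<close> and \<open>r\<close> only the two permutation matrices give a
  two-part \<open>c(Z)\<close>. On a radical element \<open>x\<close>, \<open>\<chi>\<^sub>0\<^sub>n\<close> gives \<open>x\<^sub>[\<^sub>n\<^sub>] = 0\<close> and \<open>\<chi>\<^sub>a\<^sub>b\<close> gives
  \<open>x\<^sub>[\<^sub>a\<^sub>,\<^sub>b\<^sub>] + x\<^sub>[\<^sub>b\<^sub>,\<^sub>a\<^sub>] = 0\<close>. So the part of \<open>x\<close> on two-part compositions with distinct
  parts lies in \<open>Y\<^sub>2 \<inter> \<T>\<close>, the part on longer compositions lies in \<open>Y\<^sub>3\<close>, and a diagonal
  coordinate satisfies \<open>2 x\<^sub>[\<^sub>c\<^sub>,\<^sub>c\<^sub>] = 0\<close>, so it vanishes unless \<open>p = 2\<close> and \<open>n = 2c\<close>.\<close>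

lemma sum_mult_mod_right:
  fixes w f :: "'a \<Rightarrow> int"
  shows "(\<Sum>u\<in>A. w u * (f u mod m)) mod m = (\<Sum>u\<in>A. w u * f u) mod m"
proof -
  have "(\<Sum>u\<in>A. w u * (f u mod m)) mod m = (\<Sum>u\<in>A. w u * (f u mod m) mod m) mod m"
    by (rule mod_sum_eq[symmetric])
  also have "\<dots> = (\<Sum>u\<in>A. w u * f u mod m) mod m"
    by (simp only: mod_mult_right_eq)
  finally show ?thesis by (simp only: mod_sum_eq)
qed

lemma minus_mod_eq_if_add_mod_eq_0:
  fixes a b m :: int
  assumes "(a + b) mod m = 0"
  shows "(- a) mod m = b mod m"
proof -
  have "b mod m = (a + b - a) mod m" by simp
  also have "\<dots> = ((a + b) mod m - a) mod m" by (rule mod_diff_left_eq[symmetric])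
  finally show ?thesis using assms by simp
qed

lemma mod_inverse_prime:
  assumes "prime p" "0 < k" "k < int p"
  obtains t where "(t * k) mod int p = 1"
proof -
  have "\<not> int p dvd k" using assms(2,3) zdvd_imp_le by fastforce
  hence "coprime k (int p)"
    using prime_imp_coprime[of "int p" k] assms(1) by (simp add: coprime_commute)
  then obtain t where "[k * t = 1] (mod int p)" using cong_solve_coprime_int by blast
  moreover have "1 mod int p = 1" using prime_gt_1_nat[OF assms(1)] by simp
  ultimately show ?thesis using that by (simp add: cong_def mult.commute)
qed

lemma finite_comps: "finite (comps n)"
proof -
  have "comps n \<subseteq> {xs. set xs \<subseteq> {0..n} \<and> length xs \<le> n}"
  proof
    fix q assume "q \<in> comps n"
    hence pos: "\<forall>x\<in>set q. 0 < x" and sum: "sum_list q = n" by (auto simp: comps_def)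
    have "length q \<le> sum_list q" using pos by (induction q) auto
    moreover have "set q \<subseteq> {0..n}" using sum member_le_sum_list by fastforce
    ultimately show "q \<in> {xs. set xs \<subseteq> {0..n} \<and> length xs \<le> n}" using sum by auto
  qed
  thus ?thesis using finite_lists_length_le[of "{0..n}" n] finite_subset by blast
qed

lemma comps_length_ge_1: "q \<in> comps n \<Longrightarrow> 1 \<le> n \<Longrightarrow> 1 \<le> length q"
  by (cases q) (auto simp: comps_def)

lemma comps_length_1: "q \<in> comps n \<Longrightarrow> length q = 1 \<Longrightarrow> q = [n]"
  by (cases q) (auto simp: comps_def)

lemma length_2E:
  assumes "length xs = 2"
  obtains a b where "xs = [a, b]"
  using assms by (cases xs; cases "tl xs") auto

section \<open>The matrices \<open>S(q, r)\<close>\<close>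

lemma Smat_entry_le:
  assumes "q \<in> comps n" "Z \<in> Smat q r"
  shows "Z i j \<le> n"
proof (cases "i < length q \<and> j < length r")
  case True
  have "Z i j \<le> (\<Sum>j<length r. Z i j)" using True by (intro member_le_sum) auto
  also have "\<dots> = q ! i" using assms True by (auto simp: Smat_def)
  also have "\<dots> \<le> n" using assms True elem_le_sum_list[of i q] by (auto simp: comps_def)
  finally show ?thesis .
next
  case False thus ?thesis using assms by (auto simp: Smat_def)
qed

lemma finite_Smat:
  assumes "q \<in> comps n"
  shows "finite (Smat q r)"
proof -
  let ?A = "{..<length q} \<times> {..<length r}"
  let ?F = "{f. \<forall>x. (x \<in> ?A \<longrightarrow> f x \<in> {..n}) \<and> (x \<notin> ?A \<longrightarrow> f x = (0::nat))}"
  have "finite ?F" by (rule finite_set_of_finite_funs) auto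
  moreover have "Smat q r \<subseteq> curry ` ?F"
  proof
    fix Z assume Z: "Z \<in> Smat q r"
    have "Z = curry (case_prod Z)" by simp
    moreover have "case_prod Z \<in> ?F" using Z Smat_entry_le[OF assms Z] by (auto simp: Smat_def)
    ultimately show "Z \<in> curry ` ?F" by blast
  qed
  ultimately show ?thesis using finite_subset by blast
qed

lemma sum_list_cZ: "sum_list (cZ s t Z) = (\<Sum>i<s. \<Sum>j<t. Z i j)"
proof -
  have concat: "sum_list (concat xss) = sum_list (map sum_list xss)" for xss :: "nat list list"
    by (induction xss) auto
  have "sum_list (cZ s t Z) = sum_list (concat (map (\<lambda>i. map (Z i) [0..<t]) [0..<s]))"
    unfolding cZ_def by (rule sum_list_map_filter[where f = id, simplified]) auto
  thus ?thesis by (simp add: concat o_def interv_sum_list_conv_sum_set_nat atLeast0LessThan)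
qed

lemma cZ_in_comps:
  assumes "q \<in> comps n" "Z \<in> Smat q r"
  shows "cZ (length q) (length r) Z \<in> comps n"
proof -
  have "(\<Sum>i<length q. \<Sum>j<length r. Z i j) = (\<Sum>i<length q. q ! i)"
    using assms(2) by (auto simp: Smat_def)
  also have "\<dots> = n" using assms(1) by (simp add: comps_def sum_list_sum_nth atLeast0LessThan)
  finally have "sum_list (cZ (length q) (length r) Z) = n" by (simp add: sum_list_cZ)
  thus ?thesis by (auto simp: comps_def cZ_def)
qed

lemma length_cZ: "length (cZ s t Z) = card (SIGMA i:{..<s}. {j. j < t \<and> Z i j \<noteq> 0})"
proof -
  have "length (cZ s t Z) = (\<Sum>i<s. length (filter (\<lambda>j. Z i j \<noteq> 0) [0..<t]))"
    unfolding cZ_def filter_concat length_concat map_map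
    by (simp add: o_def filter_map interv_sum_list_conv_sum_set_nat atLeast0LessThan)
  also have "\<dots> = (\<Sum>i<s. card {j. j < t \<and> Z i j \<noteq> 0})"
    by (intro sum.cong refl) (simp add: distinct_length_filter Int_def conj_commute)
  finally show ?thesis by simp
qed

lemma Smat_row_nonzero:
  assumes "q \<in> comps n" "Z \<in> Smat q r" "i < length q"
  shows "\<exists>j<length r. Z i j \<noteq> 0"
proof -
  have "(\<Sum>j<length r. Z i j) = q ! i" "0 < q ! i" using assms by (auto simp: Smat_def comps_def)
  thus ?thesis by (metis lessThan_iff less_irrefl sum.neutral)
qed

lemma Smat_column_nonzero:
  assumes "r \<in> comps n" "Z \<in> Smat q r" "j < length r"
  shows "\<exists>i<length q. Z i j \<noteq> 0"
proof -
  have "(\<Sum>i<length q. Z i j) = r ! j" "0 < r ! j" using assms by (auto simp: Smat_def comps_def)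
  thus ?thesis by (metis lessThan_iff less_irrefl sum.neutral)
qed

lemma length_cZ_ge:
  assumes "q \<in> comps n" "r \<in> comps n" "Z \<in> Smat q r"
  shows "max (length q) (length r) \<le> length (cZ (length q) (length r) Z)"
proof -
  let ?N = "SIGMA i:{..<length q}. {j. j < length r \<and> Z i j \<noteq> 0}"
  have fin: "finite ?N" by auto
  have "{..<length q} \<subseteq> fst ` ?N" using Smat_row_nonzero[OF assms(1,3)] by force
  hence "length q \<le> card (fst ` ?N)" using card_mono[OF finite_imageI[OF fin]] by fastforce
  hence rows: "length q \<le> card ?N" using card_image_le[OF fin] by (rule order_trans)
  have "{..<length r} \<subseteq> snd ` ?N" using Smat_column_nonzero[OF assms(2,3)] by force
  hence "length r \<le> card (snd ` ?N)" using card_mono[OF finite_imageI[OF fin]] by fastforce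
  hence "length r \<le> card ?N" using card_image_le[OF fin] by (rule order_trans)
  with rows show ?thesis by (simp add: length_cZ)
qed

lemma sum_mult_Bcoeff:
  fixes f :: "nat list \<Rightarrow> 'a::comm_semiring_1"
  assumes "q \<in> comps n"
  shows "(\<Sum>u\<in>comps n. f u * of_nat (Bcoeff q r u))
       = (\<Sum>Z\<in>Smat q r. f (cZ (length q) (length r) Z))"
proof -
  have "(\<Sum>u\<in>comps n. f u * of_nat (Bcoeff q r u))
      = (\<Sum>u\<in>comps n. \<Sum>Z\<in>{Z \<in> Smat q r. cZ (length q) (length r) Z = u}. f (cZ (length q) (length r) Z))"
    unfolding Bcoeff_def by (intro sum.cong refl) (auto simp: mult.commute)
  also have "\<dots> = (\<Sum>Z\<in>Smat q r. f (cZ (length q) (length r) Z))"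
    by (rule sum.group[OF finite_Smat[OF assms] finite_comps]) (use cZ_in_comps[OF assms] in auto)
  finally show ?thesis .
qed

lemma sum_Smat_single_row:
  assumes "q \<in> comps n" "length q = 1" "r \<in> comps n"
  shows "(\<Sum>Z\<in>Smat q r. f (cZ (length q) (length r) Z)) = f r"
proof -
  define Zr where "Zr = (\<lambda>(i::nat) j. if i = 0 \<and> j < length r then r ! j else 0)"
  have q: "q = [n]" using comps_length_1 assms by auto
  have "Smat q r = {Zr}"
  proof
    show "Smat q r \<subseteq> {Zr}"
    proof
      fix Z assume Z: "Z \<in> Smat q r"
      have "Z i j = Zr i j" for i j
        using Z unfolding Smat_def Zr_def q by (cases "i = 0 \<and> j < length r") auto
      thus "Z \<in> {Zr}" by auto
    qed
    show "{Zr} \<subseteq> Smat q r"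
      using assms(3) by (auto simp: Smat_def Zr_def q comps_def sum_list_sum_nth atLeast0LessThan)
  qed
  moreover have "cZ 1 (length r) Zr = r"
  proof -
    have "map (\<lambda>j. Zr 0 j) [0..<length r] = r"
      by (rule nth_equalityI) (auto simp: Zr_def)
    thus ?thesis using assms(3) by (auto simp: cZ_def comps_def intro!: filter_True)
  qed
  ultimately show ?thesis using assms(2) by simp
qed

lemma sum_Smat_single_column:
  assumes "r \<in> comps n" "length r = 1" "q \<in> comps n"
  shows "(\<Sum>Z\<in>Smat q r. f (cZ (length q) (length r) Z)) = f q"
proof -
  define Zq where "Zq = (\<lambda>i (j::nat). if j = 0 \<and> i < length q then q ! i else 0)"
  have r: "r = [n]" using comps_length_1 assms by auto
  have "Smat q r = {Zq}"
  proof
    show "Smat q r \<subseteq> {Zq}"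
    proof
      fix Z assume Z: "Z \<in> Smat q r"
      have "Z i j = Zq i j" for i j
        using Z unfolding Smat_def Zq_def r by (cases "j = 0 \<and> i < length q") auto
      thus "Z \<in> {Zq}" by auto
    qed
    show "{Zq} \<subseteq> Smat q r"
      using assms(3) by (auto simp: Smat_def Zq_def r comps_def sum_list_sum_nth atLeast0LessThan)
  qed
  moreover have "cZ (length q) 1 Zq = q"
  proof -
    have "map (\<lambda>i. Zq i 0) [0..<length q] = q"
      by (rule nth_equalityI) (auto simp: Zq_def)
    thus ?thesis using assms(3) by (auto simp: cZ_def comps_def map_concat intro!: filter_True)
  qed
  ultimately show ?thesis using assms(2) by simp
qed

lemma Smat_2x2:
  "Smat [q0, q1] [r0, r1] = {Z. (\<forall>i j. (2 \<le> i \<or> 2 \<le> j) \<longrightarrow> Z i j = 0) \<and>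
     Z 0 0 + Z 0 1 = q0 \<and> Z 1 0 + Z 1 1 = q1 \<and> Z 0 0 + Z 1 0 = r0 \<and> Z 0 1 + Z 1 1 = r1}"
proof -
  have lt2: "{..<2::nat} = {0, 1}" by auto
  show ?thesis unfolding Smat_def by (auto simp: lt2 less_2_cases_iff less_Suc_eq)
qed

definition diag2 :: "nat \<Rightarrow> nat \<Rightarrow> nat \<Rightarrow> nat \<Rightarrow> nat" where
  "diag2 a b i j = (if i = 0 \<and> j = 0 then a else if i = 1 \<and> j = 1 then b else 0)"

definition antidiag2 :: "nat \<Rightarrow> nat \<Rightarrow> nat \<Rightarrow> nat \<Rightarrow> nat" where
  "antidiag2 a b i j = (if i = 0 \<and> j = 1 then a else if i = 1 \<and> j = 0 then b else 0)"

lemma cZ_2x2: "cZ 2 2 Z = filter (\<lambda>x. x \<noteq> 0) [Z 0 0, Z 0 1, Z 1 0, Z 1 1]"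
  by (simp add: cZ_def numeral_2_eq_2)

lemma diag2_in_Smat_iff: "diag2 q0 q1 \<in> Smat [q0, q1] [r0, r1] \<longleftrightarrow> [r0, r1] = [q0, q1]"
  by (auto simp: Smat_2x2 diag2_def)

lemma antidiag2_in_Smat_iff: "antidiag2 q0 q1 \<in> Smat [q0, q1] [r0, r1] \<longleftrightarrow> [r0, r1] = [q1, q0]"
  by (auto simp: Smat_2x2 antidiag2_def)

lemma cZ_diag2: "0 < q0 \<Longrightarrow> 0 < q1 \<Longrightarrow> cZ 2 2 (diag2 q0 q1) = [q0, q1]"
  by (simp add: cZ_2x2 diag2_def)

lemma cZ_antidiag2: "0 < q0 \<Longrightarrow> 0 < q1 \<Longrightarrow> cZ 2 2 (antidiag2 q0 q1) = [q0, q1]"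
  by (simp add: cZ_2x2 antidiag2_def)

lemma Smat_2x2_short_cZ:
  assumes pos: "0 < q0" "0 < q1" "0 < r0" "0 < r1"
    and Z: "Z \<in> Smat [q0, q1] [r0, r1]" and short: "length (cZ 2 2 Z) \<le> 2"
  shows "Z = diag2 q0 q1 \<or> Z = antidiag2 q0 q1"
proof -
  have two_nonzero_of_four: "(x = 0 \<and> y = 0) \<or> (w = 0 \<and> z = 0)"
    if "length (filter (\<lambda>x. x \<noteq> 0) [w, x, y, z]) \<le> 2"
      "0 < w + x" "0 < y + z" "0 < w + y" "0 < x + z" for w x y z :: nat
    using that by (cases "w = 0"; cases "x = 0"; cases "y = 0"; cases "z = 0") auto
  have e: "\<forall>i j. (2 \<le> i \<or> 2 \<le> j) \<longrightarrow> Z i j = 0"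
    "Z 0 0 + Z 0 1 = q0" "Z 1 0 + Z 1 1 = q1" "Z 0 0 + Z 1 0 = r0" "Z 0 1 + Z 1 1 = r1"
    using Z by (auto simp: Smat_2x2)
  have "(Z 0 1 = 0 \<and> Z 1 0 = 0) \<or> (Z 0 0 = 0 \<and> Z 1 1 = 0)"
    by (rule two_nonzero_of_four[OF short[unfolded cZ_2x2]]) (use e(2-5) pos in simp_all)
  thus ?thesis
  proof
    assume "Z 0 1 = 0 \<and> Z 1 0 = 0"
    hence "Z i j = diag2 q0 q1 i j" for i j using e unfolding diag2_def
      by (cases "i < 2"; cases "j < 2") (auto simp: less_2_cases_iff)
    thus ?thesis by blast
  next
    assume "Z 0 0 = 0 \<and> Z 1 1 = 0"
    hence "Z i j = antidiag2 q0 q1 i j" for i j using e unfolding antidiag2_def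
      by (cases "i < 2"; cases "j < 2") (auto simp: less_2_cases_iff)
    thus ?thesis by blast
  qed
qed

lemma sum_Smat_2x2:
  fixes f :: "nat list \<Rightarrow> 'a::comm_semiring_1"
  assumes pos: "0 < q0" "0 < q1" "0 < r0" "0 < r1"
    and long: "\<And>u. 3 \<le> length u \<Longrightarrow> f u = 0"
  shows "(\<Sum>Z\<in>Smat [q0, q1] [r0, r1]. f (cZ 2 2 Z))
       = (of_bool ([r0, r1] = [q0, q1]) + of_bool ([r0, r1] = [q1, q0])) * f [q0, q1]"
proof -
  let ?S = "Smat [q0, q1] [r0, r1]" and ?D = "diag2 q0 q1" and ?A = "antidiag2 q0 q1"
  have fin: "finite ?S" by (rule finite_Smat[of _ "q0 + q1"]) (use pos in \<open>auto simp: comps_def\<close>)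
  have support: "Z = ?D \<or> Z = ?A" if "Z \<in> ?S" "f (cZ 2 2 Z) \<noteq> 0" for Z
    using Smat_2x2_short_cZ[OF pos that(1)] long[of "cZ 2 2 Z"] that(2) by fastforce
  have "?D \<noteq> ?A" using pos unfolding diag2_def antidiag2_def by (metis zero_neq_one less_irrefl)
  have ite_sum: "(if P then x else 0) + (if Q then x else 0) = (of_bool P + of_bool Q) * x"
    for P Q and x :: 'a
    by (simp add: distrib_right)
  have "(\<Sum>Z\<in>?S. f (cZ 2 2 Z)) = (\<Sum>Z\<in>{?D, ?A} \<inter> ?S. f (cZ 2 2 Z))"
    by (rule sum.mono_neutral_right[OF fin]) (use support in auto)
  also have "\<dots> = (\<Sum>Z\<in>{?D, ?A}. if Z \<in> ?S then f (cZ 2 2 Z) else 0)"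
    by (rule sum.inter_restrict) simp
  also have "\<dots> = (if ?D \<in> ?S then f (cZ 2 2 ?D) else 0) + (if ?A \<in> ?S then f (cZ 2 2 ?A) else 0)"
    using \<open>?D \<noteq> ?A\<close> by (subst sum.insert) auto
  also have "\<dots> = (of_bool ([r0, r1] = [q0, q1]) + of_bool ([r0, r1] = [q1, q0])) * f [q0, q1]"
    unfolding diag2_in_Smat_iff antidiag2_in_Smat_iff cZ_diag2[OF pos(1,2)] cZ_antidiag2[OF pos(1,2)]
    by (rule ite_sum)
  finally show ?thesis .
qed

lemma Sig_range: "x \<in> Sig n p \<Longrightarrow> 0 \<le> x s \<and> x s < int p"
  by (simp add: Sig_def)

lemma Sig_support: "x \<in> Sig n p \<Longrightarrow> x s \<noteq> 0 \<Longrightarrow> s \<in> comps n"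
  by (auto simp: Sig_def)

lemma sadd_in_Sig: "prime p \<Longrightarrow> f \<in> Sig n p \<Longrightarrow> g \<in> Sig n p \<Longrightarrow> sadd p f g \<in> Sig n p"
  using prime_gt_0_nat[of p] by (auto simp: Sig_def sadd_def)

lemma sneg_in_Sig: "prime p \<Longrightarrow> f \<in> Sig n p \<Longrightarrow> sneg p f \<in> Sig n p"
  using prime_gt_0_nat[of p] by (auto simp: Sig_def sneg_def)

lemma Bcoeff_eq_0:
  assumes "q \<in> comps n" "u \<notin> comps n"
  shows "Bcoeff q r u = 0"
proof -
  have "{Z \<in> Smat q r. cZ (length q) (length r) Z = u} = {}" using cZ_in_comps[OF assms(1)] assms(2) by blast
  thus ?thesis unfolding Bcoeff_def by (simp only: card.empty)
qed

lemma smul_in_Sig: "prime p \<Longrightarrow> smul n p f g \<in> Sig n p"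
  using prime_gt_0_nat[of p] by (auto simp: Sig_def smul_def Bcoeff_eq_0)

lemma Bbar_eq: "prime p \<Longrightarrow> Bbar p q s = (if s = q then 1 else 0)"
  using prime_gt_1_nat[of p] by (simp add: Bbar_def)

lemma inj_Bbar: "prime p \<Longrightarrow> inj (Bbar p)"
  by (rule injI) (metis Bbar_eq zero_neq_one)

text \<open>The multiple \<open>c B\<^sub>[\<^sub>n\<^sub>]\<close> of the identity element \<open>B\<^sub>[\<^sub>n\<^sub>]\<close> of \<open>\<Sigma>(n, p)\<close>.\<close>

definition scalar :: "nat \<Rightarrow> nat \<Rightarrow> int \<Rightarrow> nat list \<Rightarrow> int" where
  "scalar n p c = (\<lambda>s. if s = [n] then c mod int p else 0)"

lemma scalar_in_Sig: "1 \<le> n \<Longrightarrow> prime p \<Longrightarrow> scalar n p c \<in> Sig n p"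
  using prime_gt_0_nat[of p] by (auto simp: Sig_def scalar_def comps_def)

section \<open>The characters \<open>\<chi>\<^sub>a\<^sub>b\<close>\<close>

text \<open>For \<open>a + b = n\<close> the character of \<open>\<Sigma>\<^sub>n\<close> attached to the partition \<open>{a, b}\<close> takes the
  value \<open>chi_weight a b q\<close> at \<open>B\<^sub>q\<close>; for \<open>a = 0\<close> it is the augmentation.\<close>

definition chi_weight :: "nat \<Rightarrow> nat \<Rightarrow> nat list \<Rightarrow> int" where
  "chi_weight a b u = of_bool (length u = 1) + of_bool (u = [a, b]) + of_bool (u = [b, a])"

lemma chi_weight_single:
  assumes "length u = 1"
  shows "chi_weight a b u = 1"
proof -
  have "u \<noteq> [a, b]" "u \<noteq> [b, a]" using assms by auto
  with assms show ?thesis by (simp add: chi_weight_def)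
qed

lemma chi_weight_long:
  assumes "3 \<le> length u"
  shows "chi_weight a b u = 0"
proof -
  have "length u \<noteq> 1" "u \<noteq> [a, b]" "u \<noteq> [b, a]" using assms by auto
  thus ?thesis by (simp add: chi_weight_def)
qed

lemma chi_weight_pair: "chi_weight a b [x, y] = of_bool ([x, y] = [a, b]) + of_bool ([x, y] = [b, a])"
  unfolding chi_weight_def by simp

lemma chi_weight_pair_mult:
  "(of_bool ([r0, r1] = [q0, q1]) + of_bool ([r0, r1] = [q1, q0])) * chi_weight a b [q0, q1]
    = chi_weight a b [q0, q1] * chi_weight a b [r0, r1]"
proof (cases "[q0, q1] = [a, b] \<or> [q0, q1] = [b, a]")
  case True
  hence "chi_weight a b [r0, r1] = of_bool ([r0, r1] = [q0, q1]) + of_bool ([r0, r1] = [q1, q0])"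
    unfolding chi_weight_pair by (elim disjE) (simp_all add: add.commute)
  thus ?thesis by (simp add: mult.commute)
next
  case False
  hence "chi_weight a b [q0, q1] = 0"
    unfolding chi_weight_pair de_Morgan_disj by (simp only: of_bool_eq add_0 not_False_eq_True)
  thus ?thesis by simp
qed

lemma sum_Smat_2x2_chi_weight:
  assumes "0 < q0" "0 < q1" "0 < r0" "0 < r1"
  shows "(\<Sum>Z\<in>Smat [q0, q1] [r0, r1]. chi_weight a b (cZ 2 2 Z))
       = chi_weight a b [q0, q1] * chi_weight a b [r0, r1]"
proof -
  have "(\<Sum>Z\<in>Smat [q0, q1] [r0, r1]. chi_weight a b (cZ 2 2 Z))
      = (of_bool ([r0, r1] = [q0, q1]) + of_bool ([r0, r1] = [q1, q0])) * chi_weight a b [q0, q1]"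
    by (rule sum_Smat_2x2[OF assms]) (rule chi_weight_long)
  also have "\<dots> = chi_weight a b [q0, q1] * chi_weight a b [r0, r1]"
    by (rule chi_weight_pair_mult)
  finally show ?thesis .
qed

lemma chi_weight_mult:
  assumes "1 \<le> n" "q \<in> comps n" "r \<in> comps n"
  shows "(\<Sum>u\<in>comps n. chi_weight a b u * int (Bcoeff q r u)) = chi_weight a b q * chi_weight a b r"
proof -
  have lq: "1 \<le> length q" and lr: "1 \<le> length r" using comps_length_ge_1 assms by auto
  have "(\<Sum>u\<in>comps n. chi_weight a b u * int (Bcoeff q r u))
      = (\<Sum>Z\<in>Smat q r. chi_weight a b (cZ (length q) (length r) Z))"
    by (rule sum_mult_Bcoeff[OF assms(2)])
  also have "\<dots> = chi_weight a b q * chi_weight a b r"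
  proof -
    consider "length q = 1" | "length r = 1" | "length q = 2" "length r = 2"
      | "3 \<le> max (length q) (length r)" using lq lr by linarith
    thus ?thesis
    proof cases
      case 1
      hence "chi_weight a b q = 1" by (rule chi_weight_single)
      with sum_Smat_single_row[OF assms(2) 1 assms(3), of "chi_weight a b"] show ?thesis by simp
    next
      case 2
      hence "chi_weight a b r = 1" by (rule chi_weight_single)
      with sum_Smat_single_column[OF assms(3) 2 assms(2), of "chi_weight a b"] show ?thesis by simp
    next
      case 3
      obtain q0 q1 where q: "q = [q0, q1]" using length_2E[OF 3(1)] .
      obtain r0 r1 where r: "r = [r0, r1]" using length_2E[OF 3(2)] .
      have "0 < q0" "0 < q1" "0 < r0" "0 < r1" using assms(2,3) q r by (auto simp: comps_def)
      from sum_Smat_2x2_chi_weight[OF this] show ?thesis by (simp only: q r 3[unfolded q r])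
    next
      case 4
      hence "chi_weight a b (cZ (length q) (length r) Z) = 0" if "Z \<in> Smat q r" for Z
        using length_cZ_ge[OF assms(2,3) that] by (intro chi_weight_long) linarith
      moreover have "chi_weight a b q * chi_weight a b r = 0"
        using 4 chi_weight_long[of q] chi_weight_long[of r] by (cases "length q \<le> length r") auto
      ultimately show ?thesis by simp
    qed
  qed
  finally show ?thesis .
qed

definition chi :: "nat \<Rightarrow> nat \<Rightarrow> nat \<Rightarrow> nat \<Rightarrow> (nat list \<Rightarrow> int) \<Rightarrow> int" where
  "chi n p a b x = (\<Sum>q\<in>comps n. chi_weight a b q * x q) mod int p"

lemma chi_smul:
  assumes "1 \<le> n"
  shows "chi n p a b (smul n p f g) = (chi n p a b f * chi n p a b g) mod int p"
proof -
  let ?C = "comps n"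
  let ?S = "\<lambda>u. \<Sum>q\<in>?C. \<Sum>r\<in>?C. f q * g r * int (Bcoeff q r u)"
  have "chi n p a b (smul n p f g) = (\<Sum>u\<in>?C. chi_weight a b u * ?S u) mod int p"
    by (simp only: chi_def smul_def sum_mult_mod_right)
  also have "(\<Sum>u\<in>?C. chi_weight a b u * ?S u)
      = (\<Sum>u\<in>?C. \<Sum>q\<in>?C. \<Sum>r\<in>?C. f q * g r * (chi_weight a b u * int (Bcoeff q r u)))"
    by (simp add: sum_distrib_left mult_ac)
  also have "\<dots> = (\<Sum>q\<in>?C. \<Sum>r\<in>?C. \<Sum>u\<in>?C. f q * g r * (chi_weight a b u * int (Bcoeff q r u)))"
    by (subst sum.swap) (intro sum.cong refl sum.swap)
  also have "\<dots> = (\<Sum>q\<in>?C. \<Sum>r\<in>?C. f q * g r * (\<Sum>u\<in>?C. chi_weight a b u * int (Bcoeff q r u)))"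
    by (simp add: sum_distrib_left)
  also have "\<dots> = (\<Sum>q\<in>?C. \<Sum>r\<in>?C. f q * g r * (chi_weight a b q * chi_weight a b r))"
    by (intro sum.cong refl) (simp add: chi_weight_mult[OF assms])
  also have "\<dots> = (\<Sum>q\<in>?C. chi_weight a b q * f q) * (\<Sum>r\<in>?C. chi_weight a b r * g r)"
    by (simp add: sum_product mult_ac)
  finally show ?thesis by (simp add: chi_def mod_mult_eq)
qed

lemma chi_sadd: "chi n p a b (sadd p f g) = (chi n p a b f + chi n p a b g) mod int p"
proof -
  have "chi n p a b (sadd p f g) = (\<Sum>q\<in>comps n. chi_weight a b q * (f q + g q)) mod int p"
    by (simp only: chi_def sadd_def sum_mult_mod_right)
  thus ?thesis by (simp add: chi_def distrib_left sum.distrib mod_add_eq)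
qed

lemma chi_sneg: "chi n p a b (sneg p f) = (- chi n p a b f) mod int p"
proof -
  have "chi n p a b (sneg p f) = (\<Sum>q\<in>comps n. chi_weight a b q * - f q) mod int p"
    by (simp only: chi_def sneg_def sum_mult_mod_right)
  thus ?thesis by (simp add: chi_def sum_negf mod_minus_eq)
qed

lemma chi_scalar:
  assumes "1 \<le> n"
  shows "chi n p a b (scalar n p c) = c mod int p"
proof -
  have "[n] \<in> comps n" using assms by (auto simp: comps_def)
  have "(\<Sum>q\<in>comps n. chi_weight a b q * scalar n p c q) = (\<Sum>q\<in>comps n. if q = [n] then c mod int p else 0)"
    by (intro sum.cong refl) (simp add: scalar_def chi_weight_single)
  also have "\<dots> = c mod int p" using \<open>[n] \<in> comps n\<close> by (simp add: sum.delta[OF finite_comps])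
  finally show ?thesis by (simp add: chi_def)
qed

lemma sum_chi_weight:
  assumes "1 \<le> n"
  shows "(\<Sum>s\<in>comps n. chi_weight a b s * x s)
       = x [n] + (if [a, b] \<in> comps n then x [a, b] else 0) + (if [b, a] \<in> comps n then x [b, a] else 0)"
proof -
  have of_bool_mult: "of_bool P * y = (if P then y else 0)" for P and y :: int by simp
  have "chi_weight a b s * x s
      = (if s = [n] then x s else 0) + (if s = [a, b] then x s else 0) + (if s = [b, a] then x s else 0)"
    if "s \<in> comps n" for s
  proof -
    have "length s = 1 \<longleftrightarrow> s = [n]" using comps_length_1[OF that] by auto
    thus ?thesis by (simp only: chi_weight_def distrib_right of_bool_mult)
  qed
  hence "(\<Sum>s\<in>comps n. chi_weight a b s * x s) = (\<Sum>s\<in>comps n. if s = [n] then x s else 0)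
      + (\<Sum>s\<in>comps n. if s = [a, b] then x s else 0) + (\<Sum>s\<in>comps n. if s = [b, a] then x s else 0)"
    by (simp only: sum.distrib[symmetric] cong: sum.cong)
  moreover have "[n] \<in> comps n" using assms by (simp add: comps_def)
  ultimately show ?thesis by (simp only: sum.delta[OF finite_comps] if_True)
qed

section \<open>Characters and the radical\<close>

definition character :: "nat \<Rightarrow> nat \<Rightarrow> ((nat list \<Rightarrow> int) \<Rightarrow> int) \<Rightarrow> bool" where
  "character n p \<phi> \<longleftrightarrow> (\<forall>f. 0 \<le> \<phi> f \<and> \<phi> f < int p)
     \<and> (\<forall>f g. \<phi> (sadd p f g) = (\<phi> f + \<phi> g) mod int p)
     \<and> (\<forall>f. \<phi> (sneg p f) = (- \<phi> f) mod int p)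
     \<and> (\<forall>f g. \<phi> (smul n p f g) = (\<phi> f * \<phi> g) mod int p)
     \<and> (\<forall>c. \<phi> (scalar n p c) = c mod int p)"

lemma character_chi:
  assumes "1 \<le> n" "prime p"
  shows "character n p (chi n p a b)"
  using prime_gt_0_nat[OF assms(2)]
  by (simp add: character_def chi_sadd chi_sneg chi_smul[OF assms(1)] chi_scalar[OF assms(1)])
     (simp add: chi_def)

lemma lideal_character_kernel:
  assumes "prime p" "character n p \<phi>"
  shows "lideal n p {x \<in> Sig n p. \<phi> x = 0}"
proof -
  have "scalar n p 0 = (\<lambda>_. 0)" by (simp add: scalar_def fun_eq_iff)
  hence "\<phi> (\<lambda>_. 0) = 0" using assms(2) unfolding character_def by (metis mod_0)
  moreover have "(\<lambda>_. 0) \<in> Sig n p" using prime_gt_0_nat[OF assms(1)] by (simp add: Sig_def)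
  ultimately show ?thesis using assms
    by (auto simp: lideal_def character_def sadd_in_Sig sneg_in_Sig smul_in_Sig)
qed

text \<open>Every \<open>z\<close> is \<open>(z - e y) + e y\<close>, where the scalar \<open>e\<close> is chosen with \<open>\<phi> (e y) = \<phi> z\<close>, so
  that \<open>z - e y\<close> lies in the kernel.\<close>

lemma lideal_eq_Sig_if_not_in_kernel:
  assumes "1 \<le> n" "prime p" "character n p \<phi>" "lideal n p J"
    and kernel: "{x \<in> Sig n p. \<phi> x = 0} \<subseteq> J" and y: "y \<in> J" "\<phi> y \<noteq> 0"
  shows "J = Sig n p"
proof
  show "J \<subseteq> Sig n p" using assms(4) by (simp add: lideal_def)
  note \<phi> = assms(3)[unfolded character_def]
  obtain t where t: "(t * \<phi> y) mod int p = 1"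
    using mod_inverse_prime[OF assms(2)] \<phi> y(2) by (metis order_le_neq_trans)
  show "Sig n p \<subseteq> J"
  proof
    fix z assume z: "z \<in> Sig n p"
    define ey where "ey = smul n p (scalar n p (\<phi> z * t)) y"
    have ey: "ey \<in> J" using assms(1,2,4) y(1) scalar_in_Sig by (auto simp: lideal_def ey_def)
    have "\<phi> ey = (\<phi> z * ((t * \<phi> y) mod int p)) mod int p"
      using \<phi> by (simp add: ey_def mod_mult_left_eq mod_mult_right_eq mult.assoc)
    also have "\<dots> = \<phi> z" using t \<phi> by simp
    finally have "\<phi> ey = \<phi> z" .
    define w where "w = sadd p z (sneg p ey)"
    have "w \<in> Sig n p" using assms(2) z smul_in_Sig by (simp add: w_def ey_def sadd_in_Sig sneg_in_Sig)
    moreover have "\<phi> w = 0" using \<phi> \<open>\<phi> ey = \<phi> z\<close> by (simp add: w_def mod_add_right_eq)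
    ultimately have "w \<in> J" using kernel by blast
    hence "sadd p w ey \<in> J" using ey assms(4) by (simp add: lideal_def)
    moreover have "sadd p w ey = z"
    proof
      fix s
      show "sadd p w ey s = z s" using Sig_range[OF z, of s] by (simp add: w_def sadd_def sneg_def mod_simps)
    qed
    ultimately show "z \<in> J" by simp
  qed
qed

lemma max_lideal_character_kernel:
  assumes "1 \<le> n" "prime p" "character n p \<phi>"
  shows "max_lideal n p {x \<in> Sig n p. \<phi> x = 0}"
  unfolding max_lideal_def
proof (intro conjI allI impI)
  let ?K = "{x \<in> Sig n p. \<phi> x = 0}"
  show "lideal n p ?K" by (rule lideal_character_kernel[OF assms(2,3)])
  have "scalar n p 1 \<in> Sig n p" "\<phi> (scalar n p 1) = 1"
    using assms prime_gt_1_nat[OF assms(2)] scalar_in_Sig by (auto simp: character_def)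
  hence "scalar n p 1 \<in> Sig n p - ?K" by simp
  thus "?K \<noteq> Sig n p" by blast
  fix J assume J: "lideal n p J \<and> ?K \<subseteq> J"
  show "J = ?K \<or> J = Sig n p"
  proof (cases "J \<subseteq> ?K")
    case False
    then obtain y where "y \<in> J" "y \<notin> ?K" by blast
    moreover have "y \<in> Sig n p" using J \<open>y \<in> J\<close> by (auto simp: lideal_def)
    ultimately show ?thesis using lideal_eq_Sig_if_not_in_kernel[OF assms] J by blast
  qed (use J in blast)
qed

lemma rad_in_Sig: "x \<in> rad n p \<Longrightarrow> x \<in> Sig n p"
  by (simp add: rad_def)

lemma rad_character_eq_0:
  assumes "1 \<le> n" "prime p" "character n p \<phi>" "x \<in> rad n p"
  shows "\<phi> x = 0"
  using assms(4) max_lideal_character_kernel[OF assms(1-3)] by (auto simp: rad_def)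

lemma rad_sum_chi_weight:
  assumes "1 \<le> n" "prime p" "x \<in> rad n p"
  shows "(x [n] + (if [a, b] \<in> comps n then x [a, b] else 0)
          + (if [b, a] \<in> comps n then x [b, a] else 0)) mod int p = 0"
  using rad_character_eq_0[OF assms(1,2) character_chi[OF assms(1,2)] assms(3), of a b]
  by (simp only: chi_def sum_chi_weight[OF assms(1)])

lemma rad_augmentation:
  assumes "1 \<le> n" "prime p" "x \<in> rad n p"
  shows "x [n] = 0"
proof -
  have "[0, n] \<notin> comps n" "[n, 0] \<notin> comps n" by (auto simp: comps_def)
  hence "x [n] mod int p = 0" using rad_sum_chi_weight[OF assms, of 0 n] by simp
  moreover have "0 \<le> x [n]" "x [n] < int p" using Sig_range[OF rad_in_Sig[OF assms(3)]] by auto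
  ultimately show ?thesis by simp
qed

lemma rad_pair:
  assumes "1 \<le> n" "prime p" "x \<in> rad n p" "q \<in> comps n" "length q = 2"
  shows "(x q + x (rev q)) mod int p = 0"
proof -
  obtain c d where q: "q = [c, d]" using length_2E[OF assms(5)] .
  have "[c, d] \<in> comps n" "[d, c] \<in> comps n" using assms(4) q by (auto simp: comps_def)
  thus ?thesis using rad_sum_chi_weight[OF assms(1-3), of c d] rad_augmentation[OF assms(1-3)] q by simp
qed

text \<open>For \<open>q = [c, c]\<close> the relation of \<open>rad_pair\<close> reads \<open>2 x\<^sub>q = 0\<close>.\<close>

lemma rad_diagonal:
  assumes "1 \<le> n" "prime p" "x \<in> rad n p" "x [c, c] \<noteq> 0"
  shows "p = 2 \<and> n = 2 * c"
proof
  have x: "0 \<le> x [c, c]" "x [c, c] < int p" "[c, c] \<in> comps n"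
    using Sig_range Sig_support assms(4) rad_in_Sig[OF assms(3)] by auto
  thus "n = 2 * c" by (simp add: comps_def)
  have "(2 * x [c, c]) mod int p = 0" using rad_pair[OF assms(1-3) x(3)] by simp
  hence "int p dvd 2 * x [c, c]" by (simp add: dvd_eq_mod_eq_0)
  moreover have "\<not> int p dvd x [c, c]" using x(1,2) assms(4) zdvd_imp_le by fastforce
  moreover have "prime (int p)" using assms(2) by simp
  ultimately have "int p dvd 2" using prime_dvd_mult_iff by blast
  hence "p dvd 2" by presburger
  thus "p = 2" by (rule primes_dvd_imp_eq[OF assms(2) two_is_prime_nat])
qed

section \<open>The subspaces \<open>Y\<^sub>m\<close> and \<open>\<T>\<close>\<close>

definition part :: "(nat list \<Rightarrow> bool) \<Rightarrow> (nat list \<Rightarrow> int) \<Rightarrow> nat list \<Rightarrow> int" where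
  "part P x = (\<lambda>s. if P s then x s else 0)"

lemma part_in_Sig: "x \<in> Sig n p \<Longrightarrow> part P x \<in> Sig n p"
  by (auto simp: Sig_def part_def)

lemma part_eq_self: "(\<And>s. x s \<noteq> 0 \<Longrightarrow> P s) \<Longrightarrow> part P x = x"
  by (auto simp: part_def fun_eq_iff)

lemma sadd_part_disjoint:
  assumes "x \<in> Sig n p" "\<And>s. P s \<Longrightarrow> Q s \<Longrightarrow> False"
  shows "sadd p (part P x) (part Q x) = part (\<lambda>s. P s \<or> Q s) x"
  using assms Sig_range[OF assms(1)] by (fastforce simp: sadd_def part_def)

definition off_diagonal :: "nat list \<Rightarrow> bool" where
  "off_diagonal s \<longleftrightarrow> length s = 2 \<and> s ! 0 \<noteq> s ! 1"

lemma lincomb_image: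
  assumes "inj_on d P" "finite P"
  shows "lincomb p (\<lambda>w. h (inv_into P d w)) (d ` P) = (\<lambda>s. (\<Sum>a\<in>P. h a * d a s) mod int p)"
proof
  fix s
  have "(\<Sum>w\<in>d ` P. h (inv_into P d w) * w s) = (\<Sum>a\<in>P. h (inv_into P d (d a)) * d a s)"
    by (rule sum.reindex[OF assms(1), unfolded comp_def])
  also have "\<dots> = (\<Sum>a\<in>P. h a * d a s)" using assms(1) by (intro sum.cong refl) simp
  finally show "lincomb p (\<lambda>w. h (inv_into P d w)) (d ` P) s = (\<Sum>a\<in>P. h a * d a s) mod int p"
    by (simp add: lincomb_def)
qed

lemma lincomb_in_span_p: "finite F \<Longrightarrow> F \<subseteq> S \<Longrightarrow> lincomb p c F \<in> span_p p S"
  by (auto simp: span_p_def)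

lemma YspI:
  assumes p: "prime p" and f: "f \<in> Sig n p" and long: "\<And>s. f s \<noteq> 0 \<Longrightarrow> m \<le> length s"
  shows "f \<in> Ysp n p m"
proof -
  let ?Q = "{q \<in> comps n. m \<le> length q}"
  have fin: "finite ?Q" using finite_comps by simp
  have inj: "inj_on (Bbar p) ?Q" using inj_Bbar[OF p] by (simp add: inj_on_def inj_def)
  have "f = (\<lambda>s. (\<Sum>q\<in>?Q. f q * Bbar p q s) mod int p)"
  proof
    fix s
    have "(\<Sum>q\<in>?Q. f q * Bbar p q s) = (\<Sum>q\<in>?Q. if q = s then f s else 0)"
      by (intro sum.cong refl) (auto simp: Bbar_eq[OF p])
    also have "\<dots> = f s" using fin long Sig_support[OF f, of s] by (auto simp: sum.delta')
    finally show "f s = (\<Sum>q\<in>?Q. f q * Bbar p q s) mod int p" using Sig_range[OF f] by simp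
  qed
  also have "\<dots> = lincomb p (\<lambda>w. f (inv_into ?Q (Bbar p) w)) (Bbar p ` ?Q)"
    by (rule lincomb_image[OF inj fin, symmetric])
  also have "\<dots> \<in> Ysp n p m"
    unfolding Ysp_def by (rule lincomb_in_span_p) (use fin in auto)
  finally show ?thesis .
qed

definition ascending_pairs :: "nat \<Rightarrow> nat list set" where
  "ascending_pairs n = {q \<in> comps n. length q = 2 \<and> q ! 0 < q ! 1}"

definition Bbar_antisym :: "nat \<Rightarrow> nat list \<Rightarrow> nat list \<Rightarrow> int" where
  "Bbar_antisym p q = sadd p (Bbar p q) (sneg p (Bbar p (rev q)))"

lemma finite_ascending_pairs: "finite (ascending_pairs n)"
  using finite_comps by (simp add: ascending_pairs_def)

lemma rev_ascending_pairs:
  assumes "q \<in> ascending_pairs n"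
  shows "rev q \<noteq> q" "rev q \<notin> ascending_pairs n"
proof -
  have "length q = 2" "q ! 0 < q ! 1" using assms by (auto simp: ascending_pairs_def)
  then obtain a b where "q = [a, b]" "a < b" by (metis length_2E nth_Cons_0 nth_Cons_Suc One_nat_def)
  thus "rev q \<noteq> q" "rev q \<notin> ascending_pairs n" by (auto simp: ascending_pairs_def)
qed

lemma Bbar_antisym_eq:
  assumes "prime p" "q \<in> ascending_pairs n"
  shows "Bbar_antisym p q s = (if s = q then 1 else if s = rev q then (- 1) mod int p else 0)"
  using rev_ascending_pairs[OF assms(2)] prime_gt_1_nat[OF assms(1)]
  by (auto simp: Bbar_antisym_def sadd_def sneg_def Bbar_eq[OF assms(1)])

lemma inj_on_Bbar_antisym: "prime p \<Longrightarrow> inj_on (Bbar_antisym p) (ascending_pairs n)"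
proof (rule inj_onI)
  fix q q' assume p: "prime p" and "q \<in> ascending_pairs n" "q' \<in> ascending_pairs n"
    and "Bbar_antisym p q = Bbar_antisym p q'"
  hence "Bbar_antisym p q' q = 1" using Bbar_antisym_eq[OF p \<open>q \<in> _\<close>, of q] by simp
  thus "q = q'" using Bbar_antisym_eq[OF p \<open>q' \<in> _\<close>, of q] rev_ascending_pairs(2)[OF \<open>q' \<in> _\<close>] \<open>q \<in> _\<close>
    by (auto split: if_splits)
qed

lemma Bbar_antisym_image_subset:
  "Bbar_antisym p ` ascending_pairs n
     \<subseteq> {sadd p (Bbar p q) (sneg p (Bbar p r)) | q r. q \<in> comps n \<and> r \<in> comps n \<and> mset q = mset r}"
proof
  fix w assume "w \<in> Bbar_antisym p ` ascending_pairs n"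
  then obtain q where q: "q \<in> ascending_pairs n" "w = Bbar_antisym p q" by blast
  moreover have "rev q \<in> comps n" using q by (auto simp: ascending_pairs_def comps_def)
  ultimately show "w \<in> {sadd p (Bbar p q) (sneg p (Bbar p r)) | q r.
      q \<in> comps n \<and> r \<in> comps n \<and> mset q = mset r}"
    unfolding Bbar_antisym_def ascending_pairs_def
    by (intro CollectI exI[of _ q] exI[of _ "rev q"]) (auto simp: ascending_pairs_def)
qed

lemma sum_Bbar_antisym:
  assumes "prime p"
  shows "(\<Sum>q\<in>ascending_pairs n. x q * Bbar_antisym p q s)
       = (if s \<in> ascending_pairs n then x s else 0)
         + (if rev s \<in> ascending_pairs n then x (rev s) * ((- 1) mod int p) else 0)"
proof -
  have "(\<Sum>q\<in>ascending_pairs n. x q * Bbar_antisym p q s)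
      = (\<Sum>q\<in>ascending_pairs n. if q = s then x s else 0)
        + (\<Sum>q\<in>ascending_pairs n. if q = rev s then x q * ((- 1) mod int p) else 0)"
    unfolding sum.distrib[symmetric] using rev_ascending_pairs
    by (intro sum.cong refl) (auto simp: Bbar_antisym_eq[OF assms])
  thus ?thesis using finite_ascending_pairs by (simp add: sum.delta')
qed

text \<open>The antisymmetric part of \<open>x\<close> is the combination \<open>\<Sum> x\<^sub>q (B\<^sub>q - B\<^sub>r\<^sub>e\<^sub>v \<^sub>q)\<close> over the
  ascending pairs \<open>q\<close>.\<close>

lemma TspI:
  assumes p: "prime p" and x: "x \<in> Sig n p"
    and antisym: "\<And>q. q \<in> comps n \<Longrightarrow> length q = 2 \<Longrightarrow> (x q + x (rev q)) mod int p = 0"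
  shows "part off_diagonal x \<in> Tsp n p"
    (is "?u \<in> _")
proof -
  let ?P = "ascending_pairs n"
  have "?u s = (\<Sum>q\<in>?P. x q * Bbar_antisym p q s) mod int p" for s
  proof -
    note sum = sum_Bbar_antisym[OF p, where n = n and x = x and s = s]
    consider "s \<in> ?P" | "rev s \<in> ?P" | "s \<notin> ?P" "rev s \<notin> ?P" by blast
    thus ?thesis
    proof cases
      case 1
      thus ?thesis using sum rev_ascending_pairs[OF 1] Sig_range[OF x]
        by (auto simp: ascending_pairs_def part_def off_diagonal_def)
    next
      case 2
      hence "s \<notin> ?P" using rev_ascending_pairs by fastforce
      have "off_diagonal s" using 2 by (auto simp: ascending_pairs_def off_diagonal_def rev_nth)
      moreover have "(x (rev s) + x s) mod int p = 0"
        using antisym[of "rev s"] 2 by (simp add: ascending_pairs_def)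
      hence "(x (rev s) * ((- 1) mod int p)) mod int p = x s mod int p"
        by (simp only: mod_mult_right_eq mult_minus1_right minus_mod_eq_if_add_mod_eq_0)
      ultimately show ?thesis using sum \<open>s \<notin> ?P\<close> 2 Sig_range[OF x] by (simp add: part_def)
    next
      case 3
      have "?u s = 0"
      proof (rule ccontr)
        assume "?u s \<noteq> 0"
        hence s: "length s = 2" "s ! 0 \<noteq> s ! 1" "s \<in> comps n"
          using Sig_support[OF x] by (auto simp: part_def off_diagonal_def split: if_splits)
        hence "rev s \<in> comps n" by (auto simp: comps_def)
        thus False using 3 s by (auto simp: ascending_pairs_def rev_nth)
      qed
      thus ?thesis using sum 3 by simp
    qed
  qed
  hence "?u = lincomb p (\<lambda>w. x (inv_into ?P (Bbar_antisym p) w)) (Bbar_antisym p ` ?P)"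
    unfolding lincomb_image[OF inj_on_Bbar_antisym[OF p] finite_ascending_pairs] by (rule ext)
  also have "\<dots> \<in> Tsp n p" unfolding Tsp_def
    by (rule lincomb_in_span_p[OF finite_imageI[OF finite_ascending_pairs] Bbar_antisym_image_subset])
  finally show ?thesis .
qed

lemma part_eq_in_span_p:
  assumes "prime p" "x \<in> Sig n p"
  shows "part (\<lambda>s. s = q) x \<in> span_p p {Bbar p q}"
proof -
  have "part (\<lambda>s. s = q) x = lincomb p (\<lambda>_. x q) {Bbar p q}"
    using Sig_range[OF assms(2)] by (auto simp: part_def lincomb_def Bbar_eq[OF assms(1)])
  thus ?thesis by (simp add: lincomb_in_span_p)
qed

lemma rad_support:
  assumes "1 \<le> n" "prime p" "x \<in> rad n p" "x s \<noteq> 0"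
  shows "3 \<le> length s \<or> off_diagonal s \<or> (p = 2 \<and> even n \<and> s = [n div 2, n div 2])"
proof -
  have s: "s \<in> comps n" using Sig_support[OF rad_in_Sig[OF assms(3)] assms(4)] .
  consider "length s = 1" | "length s = 2" | "3 \<le> length s"
    using comps_length_ge_1[OF s assms(1)] by linarith
  thus ?thesis
  proof cases
    case 1
    thus ?thesis using comps_length_1[OF s] rad_augmentation[OF assms(1-3)] assms(4) by simp
  next
    case 2
    then obtain c d where cd: "s = [c, d]" by (rule length_2E)
    show ?thesis
    proof (cases "c = d")
      case True
      with rad_diagonal[OF assms(1-3)] assms(4) cd show ?thesis by auto
    qed (use cd in \<open>simp add: off_diagonal_def\<close>)
  qed simp
qed

lemma rad_parts_in_ssum:
  assumes "1 \<le> n" "prime p" "x \<in> rad n p"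
  shows "sadd p (part off_diagonal x) (part (\<lambda>s. 3 \<le> length s) x) \<in> ssum p (Ysp n p 2 \<inter> Tsp n p) (Ysp n p 3)"
proof -
  have x: "x \<in> Sig n p" by (rule rad_in_Sig[OF assms(3)])
  have "part off_diagonal x \<in> Ysp n p 2 \<inter> Tsp n p"
    using YspI[OF assms(2) part_in_Sig[OF x]] TspI[OF assms(2) x rad_pair[OF assms]]
    by (auto simp: part_def off_diagonal_def split: if_splits)
  moreover have "part (\<lambda>s. 3 \<le> length s) x \<in> Ysp n p 3"
    by (rule YspI[OF assms(2) part_in_Sig[OF x]]) (simp add: part_def split: if_splits)
  ultimately show ?thesis by (auto simp: ssum_def)
qed

lemma rad_decomposition:
  assumes "1 \<le> n" "prime p" "x \<in> rad n p"
  shows "x = sadd p (part (\<lambda>s. p = 2 \<and> even n \<and> s = [n div 2, n div 2]) x)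
               (sadd p (part off_diagonal x) (part (\<lambda>s. 3 \<le> length s) x))"
proof -
  note split = sadd_part_disjoint[OF rad_in_Sig[OF assms(3)]]
  have "x = part (\<lambda>s. (p = 2 \<and> even n \<and> s = [n div 2, n div 2]) \<or> off_diagonal s \<or> 3 \<le> length s) x"
    using rad_support[OF assms] by (intro part_eq_self[symmetric]) blast
  also have "\<dots> = sadd p (part (\<lambda>s. p = 2 \<and> even n \<and> s = [n div 2, n div 2]) x)
                       (part (\<lambda>s. off_diagonal s \<or> 3 \<le> length s) x)"
    by (rule split[symmetric]) (simp add: off_diagonal_def)
  also have "part (\<lambda>s. off_diagonal s \<or> 3 \<le> length s) x
      = sadd p (part off_diagonal x) (part (\<lambda>s. 3 \<le> length s) x)"
    by (rule split[symmetric]) (simp add: off_diagonal_def)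
  finally show ?thesis .
qed

theorem lemma3p2:
  fixes n p :: nat
  assumes "1 \<le> n" and "prime p"
  shows "((odd n \<or> p \<noteq> 2) \<longrightarrow>
           rad n p \<subseteq> ssum p (Ysp n p 2 \<inter> Tsp n p) (Ysp n p 3)) \<and>
         ((even n \<and> p = 2) \<longrightarrow>
           rad n p \<subseteq> ssum p (span_p p {Bbar p [n div 2, n div 2]})
                              (ssum p (Ysp n p 2 \<inter> Tsp n p) (Ysp n p 3)))"
proof (intro conjI impI subsetI)
  fix x assume x: "x \<in> rad n p"
  let ?diag = "\<lambda>s. p = 2 \<and> even n \<and> s = [n div 2, n div 2]"
  note decomp = rad_decomposition[OF assms x] and parts = rad_parts_in_ssum[OF assms x]
  {
    assume "odd n \<or> p \<noteq> 2"
    hence "part ?diag x = (\<lambda>_. 0)" by (auto simp: part_def)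
    hence "x = sadd p (part off_diagonal x) (part (\<lambda>s. 3 \<le> length s) x)"
      using decomp Sig_range[OF rad_in_Sig[OF x]] by (simp add: sadd_def fun_eq_iff)
    thus "x \<in> ssum p (Ysp n p 2 \<inter> Tsp n p) (Ysp n p 3)" using parts by simp
  next
    assume "even n \<and> p = 2"
    hence "part ?diag x = part (\<lambda>s. s = [n div 2, n div 2]) x" by (simp add: part_def)
    hence "part ?diag x \<in> span_p p {Bbar p [n div 2, n div 2]}"
      using part_eq_in_span_p[OF assms(2) rad_in_Sig[OF x]] by simp
    thus "x \<in> ssum p (span_p p {Bbar p [n div 2, n div 2]}) (ssum p (Ysp n p 2 \<inter> Tsp n p) (Ysp n p 3))"
      using parts decomp unfolding ssum_def by blast
  }
qed

end
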